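(* Let $\mathsf{UnivT},\mathsf{StrongT},\mathsf{LexT},\mathsf{WeakT}$ denote the classes of universally truthful, strongly truthful, lex-truthful and weakly truthful randomized mechanisms, respectively. Then in every ordinal setting $\mathsf{UnivT}\subseteq\mathsf{StrongT}\subseteq\mathsf{LexT}\subseteq\mathsf{WeakT}$, and each of these inclusions is strict: for each inclusion there exists an ordinal setting (in which every agent may report any strict total order on the outcomes) and a mechanism belonging to the larger class but not the smaller one.
   Context: An ordinal setting: a set $N$ of $n$ agents, a finite set $O$ of $m$ outcomes, and for each agent $j$ a set $\Sigma_j$ of allowed strict total orders on $O$; $\Sigma=\prod_j\Sigma_j$. For a strict order $\succ$, $\succ(\ell)$ denotes its $\ell$-th ranked outcome. A deterministic mechanism (social choice function) $f:\Sigma\to O$ is truthful if $f(\succ_j,\succ_{-j})\succeq_j f(\succ'_j,\succ_{-j})$ for all $j$, all $\succ_j,\succ'_j\in\Sigma_j$, all $\succ_{-j}$ (where $a\succeq_j b$ means $a\succ_j b$ or $a=b$). A randomized mechanism maps each profile to a probability distribution (lottery) over $O$. It is universally truthful if it is a mixture of deterministic truthful mechanisms with input-independent mixture weights. For a strict order $\succ$ and lotteries $p,q$: $p$ stochastically dominates $q$ w.r.t. $\succ$ if $\sum_{\ell\le i}p(\succ(\ell))\ge\sum_{\ell\le i}q(\succ(\ell))$ for all $i\in[m]$; for $p\ne q$, $p$ lexicographically dominates $q$ w.r.t. $\succ$ if there is $i\in[m]$ with $p(\succ(i))>q(\succ(i))$ and $p(\succ(\ell))=q(\succ(\ell))$ for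 all $\ell<i$. A randomized mechanism $\mathcal{M}$ is strongly truthful if $\mathcal{M}(\succ_j,\succ_{-j})$ stochastically dominates $\mathcal{M}(\succ'_j,\succ_{-j})$ w.r.t. $\succ_j$ for all $j,\succ_j,\succ'_j,\succ_{-j}$; weakly truthful if $\mathcal{M}(\succ_j,\succ_{-j})$ is not stochastically dominated by $\mathcal{M}(\succ'_j,\succ_{-j})$ w.r.t. $\succ_j$ for all such data; lex-truthful if for all such data either $\mathcal{M}(\succ_j,\succ_{-j})=\mathcal{M}(\succ'_j,\succ_{-j})$ or $\mathcal{M}(\succ_j,\succ_{-j})$ lexicographically dominates $\mathcal{M}(\succ'_j,\succ_{-j})$ w.r.t. $\succ_j$. *)

theory Defs
  imports "HOL-Probability.Probability_Mass_Function" "HOL-Library.FuncSet"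
begin

text \<open>A strict total order on the finite outcome set Out is represented by its ranking list:
  a duplicate-free list enumerating Out, best outcome first. The l-th ranked outcome
  (1-based) is xs ! (l - 1).\<close>

definition strict_orders :: "'o set \<Rightarrow> 'o list set" where
  "strict_orders Out = {xs. distinct xs \<and> set xs = Out}"

definition prefers :: "'o list \<Rightarrow> 'o \<Rightarrow> 'o \<Rightarrow> bool" where
  "prefers xs a b \<longleftrightarrow> (\<exists>i k. i < k \<and> k < length xs \<and> xs ! i = a \<and> xs ! k = b)"

definition weakly_prefers :: "'o list \<Rightarrow> 'o \<Rightarrow> 'o \<Rightarrow> bool" where
  "weakly_prefers xs a b \<longleftrightarrow> prefers xs a b \<or> a = b"

definition ordinal_setting :: "'a set \<Rightarrow> 'o set \<Rightarrow> ('a \<Rightarrow> 'o list set) \<Rightarrow> bool" where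
  "ordinal_setting N Out Sig \<longleftrightarrow> finite N \<and> finite Out \<and> (\<forall>j\<in>N. Sig j \<subseteq> strict_orders Out)"

definition profiles :: "'a set \<Rightarrow> ('a \<Rightarrow> 'o list set) \<Rightarrow> ('a \<Rightarrow> 'o list) set" where
  "profiles N Sig = PiE N Sig"

definition det_mechanism ::
  "'a set \<Rightarrow> 'o set \<Rightarrow> ('a \<Rightarrow> 'o list set) \<Rightarrow> (('a \<Rightarrow> 'o list) \<Rightarrow> 'o) \<Rightarrow> bool" where
  "det_mechanism N Out Sig f \<longleftrightarrow> (\<forall>P\<in>profiles N Sig. f P \<in> Out)"

definition det_truthful ::
  "'a set \<Rightarrow> 'o set \<Rightarrow> ('a \<Rightarrow> 'o list set) \<Rightarrow> (('a \<Rightarrow> 'o list) \<Rightarrow> 'o) \<Rightarrow> bool" where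
  "det_truthful N Out Sig f \<longleftrightarrow> det_mechanism N Out Sig f \<and>
     (\<forall>P\<in>profiles N Sig. \<forall>j\<in>N. \<forall>s'\<in>Sig j.
        weakly_prefers (P j) (f P) (f (P(j := s'))))"

definition rand_mechanism ::
  "'a set \<Rightarrow> 'o set \<Rightarrow> ('a \<Rightarrow> 'o list set) \<Rightarrow> (('a \<Rightarrow> 'o list) \<Rightarrow> 'o pmf) \<Rightarrow> bool" where
  "rand_mechanism N Out Sig M \<longleftrightarrow> (\<forall>P\<in>profiles N Sig. set_pmf (M P) \<subseteq> Out)"

definition stoch_dom :: "'o list \<Rightarrow> 'o pmf \<Rightarrow> 'o pmf \<Rightarrow> bool" where
  "stoch_dom xs p q \<longleftrightarrow>
     (\<forall>i\<in>{1..length xs}. (\<Sum>l<i. pmf p (xs ! l)) \<ge> (\<Sum>l<i. pmf q (xs ! l)))"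

definition lex_dom :: "'o list \<Rightarrow> 'o pmf \<Rightarrow> 'o pmf \<Rightarrow> bool" where
  "lex_dom xs p q \<longleftrightarrow> p \<noteq> q \<and>
     (\<exists>i<length xs. pmf p (xs ! i) > pmf q (xs ! i) \<and>
        (\<forall>l<i. pmf p (xs ! l) = pmf q (xs ! l)))"

definition UnivT :: "'a set \<Rightarrow> 'o set \<Rightarrow> ('a \<Rightarrow> 'o list set) \<Rightarrow> (('a \<Rightarrow> 'o list) \<Rightarrow> 'o pmf) set" where
  "UnivT N Out Sig = {M. rand_mechanism N Out Sig M \<and>
     (\<exists>D :: (('a \<Rightarrow> 'o list) \<Rightarrow> 'o) pmf.
        (\<forall>f\<in>set_pmf D. det_truthful N Out Sig f) \<and>
        (\<forall>P\<in>profiles N Sig. M P = map_pmf (\<lambda>f. f P) D))}"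

definition StrongT :: "'a set \<Rightarrow> 'o set \<Rightarrow> ('a \<Rightarrow> 'o list set) \<Rightarrow> (('a \<Rightarrow> 'o list) \<Rightarrow> 'o pmf) set" where
  "StrongT N Out Sig = {M. rand_mechanism N Out Sig M \<and>
     (\<forall>P\<in>profiles N Sig. \<forall>j\<in>N. \<forall>s'\<in>Sig j.
        stoch_dom (P j) (M P) (M (P(j := s'))))}"

definition LexT :: "'a set \<Rightarrow> 'o set \<Rightarrow> ('a \<Rightarrow> 'o list set) \<Rightarrow> (('a \<Rightarrow> 'o list) \<Rightarrow> 'o pmf) set" where
  "LexT N Out Sig = {M. rand_mechanism N Out Sig M \<and>
     (\<forall>P\<in>profiles N Sig. \<forall>j\<in>N. \<forall>s'\<in>Sig j.
        M P = M (P(j := s')) \<or> lex_dom (P j) (M P) (M (P(j := s'))))}"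

text \<open>Weak truthfulness: the truthful lottery is not (strictly, i.e. by a different lottery)
  stochastically dominated by a misreport's lottery.\<close>
definition WeakT :: "'a set \<Rightarrow> 'o set \<Rightarrow> ('a \<Rightarrow> 'o list set) \<Rightarrow> (('a \<Rightarrow> 'o list) \<Rightarrow> 'o pmf) set" where
  "WeakT N Out Sig = {M. rand_mechanism N Out Sig M \<and>
     (\<forall>P\<in>profiles N Sig. \<forall>j\<in>N. \<forall>s'\<in>Sig j.
        \<not> (M (P(j := s')) \<noteq> M P \<and> stoch_dom (P j) (M (P(j := s'))) (M P)))}"

end

theory Submission
  imports Defs
begin

(*
  A universally truthful mechanism is a mixture of deterministic truthful ones, and each of those,
  when the agent reports truthfully, only moves the outcome up in her order; so the probability
  of every top segment of her order can only increase, which is stochastic dominance.  If a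
  lottery stochastically dominates a different one, it must win strictly at the first rank where
  the two differ, which is lexicographic dominance; and lexicographic dominance of p over q rules
  out stochastic dominance of q over p.

  The separations use one agent and three outcomes.  The uniform lottery over the two top-ranked
  outcomes is strongly truthful, but not a mixture of truthful deterministic mechanisms: along
  the cycle of orders 012, 120, 201 the events "the agent gets her second choice" each have
  probability 1/2, yet no truthful deterministic mechanism realises two of them.  The other two
  examples trade the sure outcome 1 against a fair coin between 0 and 2.
*)

lemma sum_pmf_take_eq_prob:
  assumes "distinct xs" "i \<le> length xs"
  shows "(\<Sum>l<i. pmf p (xs ! l)) = measure_pmf.prob p (set (take i xs))"
proof -
  have "set (take i xs) = (!) xs ` {..<i}"
    using nth_image[OF assms(2)] by (simp add: lessThan_atLeast0)
  moreover have "inj_on ((!) xs) {..<i}" using assms by (intro inj_on_nth) auto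
  ultimately show ?thesis
    by (simp add: measure_measure_pmf_finite sum.reindex)
qed

lemma weakly_prefers_in_take:
  assumes "distinct xs" "weakly_prefers xs a b" "b \<in> set (take i xs)"
  shows "a \<in> set (take i xs)"
proof (cases "a = b")
  case False
  then obtain i' k where "i' < k" "k < length xs" "xs ! i' = a" "xs ! k = b"
    using assms(2) unfolding weakly_prefers_def prefers_def by blast
  moreover obtain k' where "k' < min i (length xs)" "xs ! k' = b"
    using assms(3) by (auto simp: in_set_conv_nth)
  ultimately have "i' < min i (length xs)"
    using assms(1) nth_eq_iff_index_eq by fastforce
  then show ?thesis using \<open>xs ! i' = a\<close> by (auto simp: in_set_conv_nth)
qed (use assms in simp)

lemma stoch_dom_map_pmf:
  assumes "distinct xs" "\<And>d. d \<in> set_pmf D \<Longrightarrow> weakly_prefers xs (g d) (h d)"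
  shows "stoch_dom xs (map_pmf g D) (map_pmf h D)"
  unfolding stoch_dom_def
proof
  fix i assume "i \<in> {1..length xs}"
  then have "i \<le> length xs" by simp
  have "measure_pmf.prob D (h -` set (take i xs)) \<le> measure_pmf.prob D (g -` set (take i xs))"
    using assms by (intro measure_pmf.finite_measure_mono_AE)
      (auto simp: AE_measure_pmf_iff intro: weakly_prefers_in_take)
  then show "(\<Sum>l<i. pmf (map_pmf h D) (xs ! l)) \<le> (\<Sum>l<i. pmf (map_pmf g D) (xs ! l))"
    by (simp add: sum_pmf_take_eq_prob[OF assms(1) \<open>i \<le> length xs\<close>] measure_map_pmf)
qed

lemma stoch_dom_imp_lex_dom:
  assumes "stoch_dom xs p q" "p \<noteq> q" "set_pmf p \<subseteq> set xs" "set_pmf q \<subseteq> set xs"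
  shows "lex_dom xs p q"
proof -
  have "\<exists>i<length xs. pmf p (xs ! i) \<noteq> pmf q (xs ! i)"
  proof (rule ccontr)
    assume "\<not> ?thesis"
    then have "pmf p x = pmf q x" for x
    proof (cases "x \<in> set xs")
      case False
      then show ?thesis using assms(3,4) by (metis pmf_eq_0_set_pmf subsetD)
    qed (auto simp: in_set_conv_nth)
    then show False using assms(2) by (simp add: pmf_eqI)
  qed
  then obtain i where i: "i < length xs" "pmf p (xs ! i) \<noteq> pmf q (xs ! i)"
    and before: "\<forall>l<i. pmf p (xs ! l) = pmf q (xs ! l)"
    using exists_least_iff[of "\<lambda>i. i < length xs \<and> pmf p (xs ! i) \<noteq> pmf q (xs ! i)"]
    by (metis order.strict_trans)
  have "(\<Sum>l<Suc i. pmf q (xs ! l)) \<le> (\<Sum>l<Suc i. pmf p (xs ! l))"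
    using assms(1) i(1) unfolding stoch_dom_def by (auto dest: bspec[of _ _ "Suc i"])
  moreover have "(\<Sum>l<i. pmf q (xs ! l)) = (\<Sum>l<i. pmf p (xs ! l))"
    using before by simp
  ultimately have "pmf p (xs ! i) > pmf q (xs ! i)" using i(2) by simp
  then show ?thesis using assms(2) i(1) before unfolding lex_dom_def by blast
qed

lemma lex_dom_imp_not_stoch_dom:
  assumes "lex_dom xs p q"
  shows "\<not> stoch_dom xs q p"
proof
  assume "stoch_dom xs q p"
  obtain i where i: "i < length xs" "pmf p (xs ! i) > pmf q (xs ! i)"
    and before: "\<forall>l<i. pmf p (xs ! l) = pmf q (xs ! l)"
    using assms unfolding lex_dom_def by blast
  have "(\<Sum>l<Suc i. pmf p (xs ! l)) \<le> (\<Sum>l<Suc i. pmf q (xs ! l))"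
    using \<open>stoch_dom xs q p\<close> i(1) unfolding stoch_dom_def by (auto dest: bspec[of _ _ "Suc i"])
  moreover have "(\<Sum>l<i. pmf p (xs ! l)) = (\<Sum>l<i. pmf q (xs ! l))"
    using before by simp
  ultimately show False using i(2) by simp
qed

lemma profiles_fun_upd:
  assumes "P \<in> profiles N Sig" "j \<in> N" "s \<in> Sig j"
  shows "P(j := s) \<in> profiles N Sig"
  using assms unfolding profiles_def by (auto simp: PiE_iff extensional_def)

lemma profile_in_strict_orders:
  assumes "ordinal_setting N Out Sig" "P \<in> profiles N Sig" "j \<in> N"
  shows "P j \<in> strict_orders Out"
  using assms unfolding ordinal_setting_def profiles_def by (auto simp: PiE_iff)

lemma UnivT_subset_StrongT:
  assumes "ordinal_setting N Out Sig"
  shows "UnivT N Out Sig \<subseteq> StrongT N Out Sig"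
proof
  fix M assume "M \<in> UnivT N Out Sig"
  then obtain D where rand: "rand_mechanism N Out Sig M"
    and truthful: "\<forall>f\<in>set_pmf D. det_truthful N Out Sig f"
    and mixture: "\<forall>P\<in>profiles N Sig. M P = map_pmf (\<lambda>f. f P) D"
    unfolding UnivT_def by blast
  have "stoch_dom (P j) (M P) (M (P(j := s)))"
    if P: "P \<in> profiles N Sig" and j: "j \<in> N" and s: "s \<in> Sig j" for P j s
  proof -
    have "weakly_prefers (P j) (f P) (f (P(j := s)))" if "f \<in> set_pmf D" for f
      using truthful that P j s unfolding det_truthful_def by blast
    then show ?thesis
      using mixture P profiles_fun_upd[OF P j s] profile_in_strict_orders[OF assms P j]
      by (simp add: stoch_dom_map_pmf strict_orders_def)
  qed
  with rand show "M \<in> StrongT N Out Sig" unfolding StrongT_def by blast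
qed

lemma StrongT_subset_LexT:
  assumes "ordinal_setting N Out Sig"
  shows "StrongT N Out Sig \<subseteq> LexT N Out Sig"
proof
  fix M assume "M \<in> StrongT N Out Sig"
  then have rand: "rand_mechanism N Out Sig M"
    and dom: "\<forall>P\<in>profiles N Sig. \<forall>j\<in>N. \<forall>s\<in>Sig j. stoch_dom (P j) (M P) (M (P(j := s)))"
    unfolding StrongT_def by auto
  have "M P = M (P(j := s)) \<or> lex_dom (P j) (M P) (M (P(j := s)))"
    if P: "P \<in> profiles N Sig" and j: "j \<in> N" and s: "s \<in> Sig j" for P j s
    using stoch_dom_imp_lex_dom[of "P j" "M P" "M (P(j := s))"] dom rand P j s
      profiles_fun_upd[OF P j s] profile_in_strict_orders[OF assms P j]
    unfolding rand_mechanism_def strict_orders_def by blast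
  with rand show "M \<in> LexT N Out Sig" unfolding LexT_def by blast
qed

lemma LexT_subset_WeakT: "LexT N Out Sig \<subseteq> WeakT N Out Sig"
  unfolding LexT_def WeakT_def using lex_dom_imp_not_stoch_dom by fastforce

definition single_profile :: "'a \<Rightarrow> 'o list \<Rightarrow> 'a \<Rightarrow> 'o list" where
  "single_profile a xs = (\<lambda>_. undefined)(a := xs)"

lemma single_profile_simps [simp]:
  "single_profile a xs a = xs"
  "(single_profile a xs)(a := ys) = single_profile a ys"
  unfolding single_profile_def by auto

lemma profiles_single_agent: "profiles {a} (\<lambda>_. S) = single_profile a ` S"
proof
  show "profiles {a} (\<lambda>_. S) \<subseteq> single_profile a ` S"
  proof
    fix P assume "P \<in> profiles {a} (\<lambda>_. S)"
    then have "P a \<in> S" and "P = single_profile a (P a)"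
      unfolding profiles_def single_profile_def by (auto simp: PiE_iff extensional_def)
    then show "P \<in> single_profile a ` S" by blast
  qed
qed (auto simp: profiles_def single_profile_def PiE_iff extensional_def split: if_split_asm)

lemma rand_mechanism_single_agent_iff:
  "rand_mechanism {a} Out (\<lambda>_. S) (\<lambda>P. L (P a)) \<longleftrightarrow> (\<forall>xs\<in>S. set_pmf (L xs) \<subseteq> Out)"
  unfolding rand_mechanism_def profiles_single_agent by simp

lemma StrongT_single_agent_iff:
  "(\<lambda>P. L (P a)) \<in> StrongT {a} Out (\<lambda>_. S) \<longleftrightarrow>
     (\<forall>xs\<in>S. set_pmf (L xs) \<subseteq> Out) \<and> (\<forall>xs\<in>S. \<forall>ys\<in>S. stoch_dom xs (L xs) (L ys))"
  unfolding StrongT_def by (simp add: rand_mechanism_single_agent_iff profiles_single_agent)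

lemma LexT_single_agent_iff:
  "(\<lambda>P. L (P a)) \<in> LexT {a} Out (\<lambda>_. S) \<longleftrightarrow>
     (\<forall>xs\<in>S. set_pmf (L xs) \<subseteq> Out) \<and> (\<forall>xs\<in>S. \<forall>ys\<in>S. L xs = L ys \<or> lex_dom xs (L xs) (L ys))"
  unfolding LexT_def by (simp add: rand_mechanism_single_agent_iff profiles_single_agent)

lemma WeakT_single_agent_iff:
  "(\<lambda>P. L (P a)) \<in> WeakT {a} Out (\<lambda>_. S) \<longleftrightarrow>
     (\<forall>xs\<in>S. set_pmf (L xs) \<subseteq> Out) \<and> (\<forall>xs\<in>S. \<forall>ys\<in>S. L ys = L xs \<or> \<not> stoch_dom xs (L ys) (L xs))"
  unfolding WeakT_def by (auto simp: rand_mechanism_single_agent_iff profiles_single_agent)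

lemma strict_orders_three:
  "strict_orders {0, 1, 2 :: nat} = {[0,1,2], [0,2,1], [1,0,2], [1,2,0], [2,0,1], [2,1,0]}"
  (is "_ = ?S")
proof
  show "strict_orders {0, 1, 2} \<subseteq> ?S"
  proof
    fix xs :: "nat list" assume "xs \<in> strict_orders {0, 1, 2}"
    then have "distinct xs" and set: "set xs = {0, 1, 2}" unfolding strict_orders_def by auto
    then have "length xs = 3" using distinct_card by fastforce
    then obtain a b c where xs: "xs = [a, b, c]" by (auto simp: length_Suc_conv numeral_3_eq_3)
    have "a \<in> {0, 1, 2}" "b \<in> {0, 1, 2}" "c \<in> {0, 1, 2}"
      by (simp_all only: set[symmetric] xs) simp_all
    moreover have "a \<noteq> b" "a \<noteq> c" "b \<noteq> c" using \<open>distinct xs\<close> xs by auto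
    ultimately show "xs \<in> ?S" unfolding xs by (simp only: insert_iff empty_iff) auto
  qed
qed (auto simp: strict_orders_def)

lemma prefers_three_iff:
  "prefers [a, b, c] x y \<longleftrightarrow> (x = a \<and> y = b) \<or> (x = a \<and> y = c) \<or> (x = b \<and> y = c)"
proof
  assume "prefers [a, b, c] x y"
  then obtain i k where "i < k" "k < 3" "[a, b, c] ! i = x" "[a, b, c] ! k = y"
    unfolding prefers_def by auto
  moreover have "(i = 0 \<and> k = 1) \<or> (i = 0 \<and> k = 2) \<or> (i = 1 \<and> k = 2)"
    using \<open>i < k\<close> \<open>k < 3\<close> by auto
  ultimately show "(x = a \<and> y = b) \<or> (x = a \<and> y = c) \<or> (x = b \<and> y = c)" by auto
next
  have "prefers [a, b, c] ([a, b, c] ! i) ([a, b, c] ! k)" if "i < k" "k < 3" for i k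
    using that unfolding prefers_def by (intro exI[where x=i] exI[where x=k]) simp
  from this[of 0 1] this[of 0 2] this[of 1 2]
  show "(x = a \<and> y = b) \<or> (x = a \<and> y = c) \<or> (x = b \<and> y = c) \<Longrightarrow> prefers [a, b, c] x y"
    by auto
qed

lemma stoch_dom_three_iff:
  "stoch_dom [a, b, c] p q \<longleftrightarrow>
     pmf p a \<ge> pmf q a \<and> pmf p a + pmf p b \<ge> pmf q a + pmf q b \<and>
     pmf p a + pmf p b + pmf p c \<ge> pmf q a + pmf q b + pmf q c"
proof -
  have "{1..length [a, b, c]} = {1, 2, 3}" by auto
  then show ?thesis unfolding stoch_dom_def by (simp add: eval_nat_numeral lessThan_Suc ac_simps)
qed

lemma lex_dom_three_iff:
  "lex_dom [a, b, c] p q \<longleftrightarrow>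
     pmf p a > pmf q a \<or> (pmf p a = pmf q a \<and> pmf p b > pmf q b) \<or>
     (pmf p a = pmf q a \<and> pmf p b = pmf q b \<and> pmf p c > pmf q c)"
  (is "_ \<longleftrightarrow> ?first \<or> ?second \<or> ?third")
proof -
  have "(\<exists>i<length [a, b, c]. pmf p ([a, b, c] ! i) > pmf q ([a, b, c] ! i) \<and>
                (\<forall>l<i. pmf p ([a, b, c] ! l) = pmf q ([a, b, c] ! l))) \<longleftrightarrow>
        ?first \<or> ?second \<or> ?third"
    by (simp add: Ex_less_Suc2 All_less_Suc2) auto
  moreover have "?first \<or> ?second \<or> ?third \<Longrightarrow> p \<noteq> q" by auto
  ultimately show ?thesis unfolding lex_dom_def by blast
qed

definition uniform_top_two :: "nat list \<Rightarrow> nat pmf" where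
  "uniform_top_two xs = pmf_of_set {xs ! 0, xs ! 1}"

definition one_if_ranked_first :: "nat list \<Rightarrow> nat pmf" where
  "one_if_ranked_first xs = (if xs ! 0 = 1 then return_pmf 1 else pmf_of_set {0, 2})"

definition one_unless_ranked_last :: "nat list \<Rightarrow> nat pmf" where
  "one_unless_ranked_last xs = (if xs ! 2 = 1 then pmf_of_set {0, 2} else return_pmf 1)"

lemma return_pmf_one_neq_uniform_zero_two: "return_pmf (1 :: nat) \<noteq> pmf_of_set {0, 2}"
proof
  assume "return_pmf (1 :: nat) = pmf_of_set {0, 2}"
  then have "pmf (return_pmf (1 :: nat)) 1 = pmf (pmf_of_set {0, 2 :: nat}) 1" by simp
  then show False by simp
qed

lemma uniform_top_two_StrongT:
  "(\<lambda>P. uniform_top_two (P 0)) \<in> StrongT {0 :: nat} {0, 1, 2} (\<lambda>_. strict_orders {0, 1, 2})"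
  unfolding StrongT_single_agent_iff strict_orders_three
  by (simp add: stoch_dom_three_iff uniform_top_two_def)

lemma one_if_ranked_first_LexT:
  "(\<lambda>P. one_if_ranked_first (P 0)) \<in> LexT {0 :: nat} {0, 1, 2} (\<lambda>_. strict_orders {0, 1, 2})"
  unfolding LexT_single_agent_iff strict_orders_three
  by (simp add: lex_dom_three_iff one_if_ranked_first_def)

lemma one_if_ranked_first_not_StrongT:
  "(\<lambda>P. one_if_ranked_first (P 0)) \<notin> StrongT {0 :: nat} {0, 1, 2} (\<lambda>_. strict_orders {0, 1, 2})"
  unfolding StrongT_single_agent_iff strict_orders_three
  by (simp add: stoch_dom_three_iff one_if_ranked_first_def)

lemma one_unless_ranked_last_WeakT:
  "(\<lambda>P. one_unless_ranked_last (P 0)) \<in> WeakT {0 :: nat} {0, 1, 2} (\<lambda>_. strict_orders {0, 1, 2})"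
  unfolding WeakT_single_agent_iff strict_orders_three
  by (simp add: stoch_dom_three_iff one_unless_ranked_last_def)

lemma one_unless_ranked_last_not_LexT:
  "(\<lambda>P. one_unless_ranked_last (P 0)) \<notin> LexT {0 :: nat} {0, 1, 2} (\<lambda>_. strict_orders {0, 1, 2})"
  unfolding LexT_single_agent_iff strict_orders_three
  using return_pmf_one_neq_uniform_zero_two
  by (simp add: lex_dom_three_iff one_unless_ranked_last_def)

lemma uniform_top_two_not_UnivT:
  "(\<lambda>P. uniform_top_two (P 0)) \<notin> UnivT {0 :: nat} {0, 1, 2} (\<lambda>_. strict_orders {0, 1, 2})"
proof
  let ?S = "strict_orders {0, 1, 2 :: nat}"
  assume "(\<lambda>P. uniform_top_two (P 0)) \<in> UnivT {0 :: nat} {0, 1, 2} (\<lambda>_. ?S)"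
  then obtain D where truthful: "\<forall>f\<in>set_pmf D. det_truthful {0 :: nat} {0, 1, 2} (\<lambda>_. ?S) f"
    and mixture: "\<forall>P\<in>profiles {0 :: nat} (\<lambda>_. ?S). uniform_top_two (P 0) = map_pmf (\<lambda>f. f P) D"
    unfolding UnivT_def by auto
  define event where "event xs y = {f. f (single_profile 0 xs) = y} \<inter> set_pmf D" for xs y
  have prob_event: "measure_pmf.prob D (event xs y) = pmf (uniform_top_two xs) y"
    if "xs \<in> ?S" for xs y
    using mixture that unfolding event_def profiles_single_agent
    by (simp add: measure_Int_set_pmf pmf_map vimage_def)
  have no_profitable_imitation: False
    if "f \<in> event xs a" "f \<in> event [a, b, c] b" "xs \<in> ?S" "[a, b, c] \<in> ?S" for f xs a b c
  proof -
    have "weakly_prefers [a, b, c] (f (single_profile 0 [a, b, c])) (f (single_profile 0 xs))"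
      using truthful that(1,3,4) unfolding event_def det_truthful_def profiles_single_agent by auto
    with that(1,2,4) show False
      unfolding event_def weakly_prefers_def prefers_three_iff strict_orders_def by auto
  qed
  let ?E0 = "event [0, 1, 2] 1" and ?E1 = "event [1, 2, 0] 2" and ?E2 = "event [2, 0, 1] 0"
  have cyclic_orders: "[0, 1, 2] \<in> ?S" "[1, 2, 0] \<in> ?S" "[2, 0, 1] \<in> ?S"
    by (simp_all add: strict_orders_def insert_commute)
  \<comment> \<open>The second choice of each cyclic order is the first choice of the next one.\<close>
  have "?E0 \<inter> ?E1 = {}" "?E1 \<inter> ?E2 = {}" "?E0 \<inter> ?E2 = {}"
    using no_profitable_imitation[of _ "[0, 1, 2]" 1 2 0]
      no_profitable_imitation[of _ "[1, 2, 0]" 2 0 1]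
      no_profitable_imitation[of _ "[2, 0, 1]" 0 1 2] cyclic_orders
    by blast+
  then have "measure_pmf.prob D (?E0 \<union> ?E1 \<union> ?E2) =
      measure_pmf.prob D ?E0 + measure_pmf.prob D ?E1 + measure_pmf.prob D ?E2"
    by (simp add: measure_pmf.finite_measure_Union Int_Un_distrib2)
  also have "\<dots> = 3 / 2"
    using cyclic_orders by (simp add: prob_event uniform_top_two_def)
  finally have "measure_pmf.prob D (?E0 \<union> ?E1 \<union> ?E2) = 3 / 2" .
  then show False using measure_pmf.prob_le_1[of D "?E0 \<union> ?E1 \<union> ?E2"] by linarith
qed

theorem theorem3:
  shows "(\<forall>(N :: 'a set) (Out :: 'o set) Sig. ordinal_setting N Out Sig \<longrightarrow>
            UnivT N Out Sig \<subseteq> StrongT N Out Sig \<and>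
            StrongT N Out Sig \<subseteq> LexT N Out Sig \<and>
            LexT N Out Sig \<subseteq> WeakT N Out Sig)
    \<and> (\<exists>(N :: nat set) (Out :: nat set) Sig M. ordinal_setting N Out Sig \<and>
            (\<forall>j\<in>N. Sig j = strict_orders Out) \<and>
            M \<in> StrongT N Out Sig - UnivT N Out Sig)
    \<and> (\<exists>(N :: nat set) (Out :: nat set) Sig M. ordinal_setting N Out Sig \<and>
            (\<forall>j\<in>N. Sig j = strict_orders Out) \<and>
            M \<in> LexT N Out Sig - StrongT N Out Sig)
    \<and> (\<exists>(N :: nat set) (Out :: nat set) Sig M. ordinal_setting N Out Sig \<and>
            (\<forall>j\<in>N. Sig j = strict_orders Out) \<and>
            M \<in> WeakT N Out Sig - LexT N Out Sig)"
proof -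
  have setting: "ordinal_setting {0 :: nat} {0, 1, 2 :: nat} (\<lambda>_. strict_orders {0, 1, 2})"
    unfolding ordinal_setting_def by simp
  show ?thesis
    using UnivT_subset_StrongT StrongT_subset_LexT LexT_subset_WeakT setting
      uniform_top_two_StrongT uniform_top_two_not_UnivT
      one_if_ranked_first_LexT one_if_ranked_first_not_StrongT
      one_unless_ranked_last_WeakT one_unless_ranked_last_not_LexT
    by blast
qed

end
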